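(* Let $X_1,X_2\subset\mathbb{R}$ be endowed with the Borel $\sigma$-algebra $\mathcal{B}$, and let $(X_1,\mathcal{B},\mu_1,f_1)$ and $(X_2,\mathcal{B},\mu_2,f_2)$ be measure-preserving dynamical systems that are isomorphic via a continuous map $\phi:X_1\to X_2$ (so $\phi\circ f_1=f_2\circ\phi$). Suppose $f_1$ is topologically transitive and that, for all $x\in X_1$, the points $x$ (under $f_1$) and $\phi(x)$ (under $f_2$) define the same order patterns. Then $\phi$ is order-preserving, i.e. $x<x'$ in $X_1$ implies $\phi(x)<\phi(x')$.
   Context: For a map $T:X\to X$ on a totally ordered set and $L\geq 2$, a point $x$ defines the order pattern $\pi=[\pi_0,\dots,\pi_{L-1}]$ (a permutation of $\{0,\dots,L-1\}$) if $T^{\pi_0}(x)<T^{\pi_1}(x)<\dots<T^{\pi_{L-1}}(x)$. "$x$ and $\phi(x)$ define the same order patterns" means that for every $L\geq2$ and every permutation $\pi$ of $\{0,\dots,L-1\}$, $x$ defines $\pi$ under $f_1$ if and only if $\phi(x)$ defines $\pi$ under $f_2$. *)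

theory Defs
  imports "HOL-Probability.Probability"
begin

definition mpds :: "'a measure \<Rightarrow> ('a \<Rightarrow> 'a) \<Rightarrow> bool" where
  "mpds M f \<longleftrightarrow> prob_space M \<and> f \<in> measurable M M \<and> distr M M f = M"

definition mpds_isomorphism ::
  "'a measure \<Rightarrow> ('a \<Rightarrow> 'a) \<Rightarrow> 'b measure \<Rightarrow> ('b \<Rightarrow> 'b) \<Rightarrow> ('a \<Rightarrow> 'b) \<Rightarrow> bool" where
  "mpds_isomorphism M1 f1 M2 f2 \<phi> \<longleftrightarrow>
     bij_betw \<phi> (space M1) (space M2) \<and>
     \<phi> \<in> measurable M1 M2 \<and>
     the_inv_into (space M1) \<phi> \<in> measurable M2 M1 \<and>
     distr M1 M2 \<phi> = M2 \<and>
     (\<forall>x\<in>space M1. \<phi> (f1 x) = f2 (\<phi> x))"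

definition top_transitive :: "'a::topological_space set \<Rightarrow> ('a \<Rightarrow> 'a) \<Rightarrow> bool" where
  "top_transitive X f \<longleftrightarrow>
     (\<forall>U V. openin (top_of_set X) U \<and> openin (top_of_set X) V \<and> U \<noteq> {} \<and> V \<noteq> {} \<longrightarrow>
        (\<exists>n>0. (f ^^ n) ` U \<inter> V \<noteq> {}))"

definition is_perm_list :: "nat list \<Rightarrow> bool" where
  "is_perm_list \<pi> \<longleftrightarrow> distinct \<pi> \<and> set \<pi> = {..<length \<pi>}"

definition defines_pattern :: "('a::linorder \<Rightarrow> 'a) \<Rightarrow> 'a \<Rightarrow> nat list \<Rightarrow> bool" where
  "defines_pattern T x \<pi> \<longleftrightarrow>
     (\<forall>i. Suc i < length \<pi> \<longrightarrow> (T ^^ (\<pi> ! i)) x < (T ^^ (\<pi> ! Suc i)) x)"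

definition same_order_patterns ::
  "('a::linorder \<Rightarrow> 'a) \<Rightarrow> 'a \<Rightarrow> ('b::linorder \<Rightarrow> 'b) \<Rightarrow> 'b \<Rightarrow> bool" where
  "same_order_patterns T1 x T2 y \<longleftrightarrow>
     (\<forall>\<pi>. length \<pi> \<ge> 2 \<and> is_perm_list \<pi> \<longrightarrow>
        (defines_pattern T1 x \<pi> \<longleftrightarrow> defines_pattern T2 y \<pi>))"

end

theory Submission
  imports Defs
begin

text \<open>If \<open>\<phi> x' < \<phi> x\<close> for some \<open>x < x'\<close>, continuity gives neighbourhoods of \<open>x\<close>
  and \<open>x'\<close> on which \<open>\<phi>\<close> stays above resp. below a separating value, and topological
  transitivity of \<open>f\<^sub>1\<close> yields an orbit going from the first to the second: a point \<open>u\<close>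
  with \<open>u < f\<^sub>1\<^sup>n(u)\<close> but \<open>\<phi>(f\<^sub>1\<^sup>n(u)) < \<phi>(u)\<close>. Since \<open>\<phi>(f\<^sub>1\<^sup>n(u)) = f\<^sub>2\<^sup>n(\<phi>(u))\<close>, this
  contradicts the equality of order patterns, which forces the relative order of any two
  orbit points to be the same at \<open>u\<close> and at \<open>\<phi>(u)\<close>; injectivity of \<open>\<phi>\<close> makes the
  resulting monotonicity strict.\<close>

lemma defines_pattern_iff_sorted_wrt:
  "defines_pattern T x \<pi> \<longleftrightarrow> sorted_wrt (\<lambda>i j. (T ^^ i) x < (T ^^ j) x) \<pi>"
  unfolding defines_pattern_def
  by (rule sorted_wrt_iff_nth_Suc_transp[symmetric]) (auto simp: transp_def)

lemma same_order_patterns_less: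
  fixes T1 :: "'a::linorder \<Rightarrow> 'a" and T2 :: "'b::linorder \<Rightarrow> 'b"
  assumes same: "same_order_patterns T1 x T2 y"
    and inj: "inj_on (\<lambda>i. (T1 ^^ i) x) {..k}"
    and "a \<le> k" "b \<le> k" and less: "(T1 ^^ a) x < (T1 ^^ b) x"
  shows "(T2 ^^ a) y < (T2 ^^ b) y"
proof -
  define g where "g = (\<lambda>i. (T1 ^^ i) x)"
  define \<pi> where "\<pi> = sort_key g [0..<Suc k]"
  have set_\<pi>: "set \<pi> = {..k}"
    unfolding \<pi>_def by auto
  have "a \<noteq> b"
    using less by auto
  with \<open>a \<le> k\<close> \<open>b \<le> k\<close> have len: "length \<pi> \<ge> 2"
    unfolding \<pi>_def by simp
  have perm: "is_perm_list \<pi>"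
    unfolding is_perm_list_def \<pi>_def by (auto simp: distinct_sort)
  have "inj_on g (set \<pi>)"
    using inj by (simp add: set_\<pi> g_def)
  moreover have "sorted (map g \<pi>)"
    unfolding \<pi>_def by (rule sorted_sort_key)
  ultimately have strict: "sorted_wrt (<) (map g \<pi>)"
    using perm by (simp add: strict_sorted_iff distinct_map is_perm_list_def)
  then have "defines_pattern T1 x \<pi>"
    by (simp add: defines_pattern_iff_sorted_wrt sorted_wrt_map g_def)
  then have sorted2: "sorted_wrt (\<lambda>i j. (T2 ^^ i) y < (T2 ^^ j) y) \<pi>"
    using same len perm by (simp add: same_order_patterns_def defines_pattern_iff_sorted_wrt)
  obtain p q where p: "p < length \<pi>" "\<pi> ! p = a" and q: "q < length \<pi>" "\<pi> ! q = b"
    using \<open>a \<le> k\<close> \<open>b \<le> k\<close> set_\<pi> by (metis atMost_iff in_set_conv_nth)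
  have "p < q"
  proof (rule ccontr)
    assume "\<not> p < q"
    with \<open>a \<noteq> b\<close> p q have "q < p"
      by (metis linorder_neqE_nat)
    with strict p q have "g b < g a"
      by (auto simp: sorted_wrt_map dest: sorted_wrt_nth_less)
    with less show False
      by (simp add: g_def)
  qed
  then show ?thesis
    using sorted_wrt_nth_less[OF sorted2 _ q(1)] p q by blast
qed

text \<open>An orbit segment that revisits a point can be shortened by the length of the loop.\<close>

lemma funpow_injective_prefix:
  fixes f :: "'a \<Rightarrow> 'a"
  shows "\<exists>k\<le>n. (f ^^ k) x = (f ^^ n) x \<and> inj_on (\<lambda>i. (f ^^ i) x) {..k}"
proof (induction n rule: less_induct)
  case (less n)
  show ?case
  proof (cases "inj_on (\<lambda>i. (f ^^ i) x) {..n}")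
    case True
    then show ?thesis by blast
  next
    case False
    then obtain i j where ij: "i < j" "j \<le> n" "(f ^^ i) x = (f ^^ j) x"
      unfolding inj_on_def by (metis atMost_iff linorder_neqE_nat)
    have "(f ^^ (n - j + i)) x = (f ^^ (n - j)) ((f ^^ j) x)"
      by (simp add: funpow_add ij(3))
    also have "\<dots> = (f ^^ n) x"
      using ij(2) by (metis comp_apply funpow_add le_add_diff_inverse2)
    finally have "(f ^^ (n - j + i)) x = (f ^^ n) x" .
    moreover have shorter: "n - j + i < n"
      using ij by linarith
    ultimately obtain k where k: "k \<le> n - j + i" "(f ^^ k) x = (f ^^ n) x"
        "inj_on (\<lambda>i. (f ^^ i) x) {..k}"
      using less.IH[of "n - j + i"] by auto
    have "k \<le> n"
      using k(1) shorter by linarith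
    with k(2,3) show ?thesis
      by (intro exI[of _ k]) simp
  qed
qed

lemma funpow_semiconj_on:
  assumes "\<forall>x\<in>X. f x \<in> X" and "\<forall>x\<in>X. \<phi> (f x) = g (\<phi> x)" and "x \<in> X"
  shows "(f ^^ n) x \<in> X \<and> \<phi> ((f ^^ n) x) = (g ^^ n) (\<phi> x)"
proof (induction n)
  case 0
  show ?case
    using assms(3) by simp
next
  case (Suc n)
  then have "(f ^^ n) x \<in> X" and "\<phi> ((f ^^ n) x) = (g ^^ n) (\<phi> x)"
    by blast+
  then have "f ((f ^^ n) x) \<in> X" and "\<phi> (f ((f ^^ n) x)) = g ((g ^^ n) (\<phi> x))"
    using assms(1,2) by metis+
  then show ?case
    by (simp only: funpow.simps comp_apply)
qed

lemma semiconj_on_orbit_less: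
  fixes f :: "'a::linorder \<Rightarrow> 'a" and g :: "'b::linorder \<Rightarrow> 'b"
  assumes "\<forall>x\<in>X. f x \<in> X" and "\<forall>x\<in>X. \<phi> (f x) = g (\<phi> x)"
    and "\<forall>x\<in>X. same_order_patterns f x g (\<phi> x)"
    and "x \<in> X" and "x < (f ^^ n) x"
  shows "\<phi> x < \<phi> ((f ^^ n) x)"
proof -
  obtain k where "(f ^^ k) x = (f ^^ n) x" and inj: "inj_on (\<lambda>i. (f ^^ i) x) {..k}"
    using funpow_injective_prefix[of n f x] by blast
  have same: "same_order_patterns f x g (\<phi> x)"
    using assms(3,4) by blast
  have "(f ^^ 0) x < (f ^^ k) x"
    using assms(5) \<open>(f ^^ k) x = (f ^^ n) x\<close> by (simp only: funpow_0)
  then have "(g ^^ 0) (\<phi> x) < (g ^^ k) (\<phi> x)"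
    by (rule same_order_patterns_less[OF same inj le0 order_refl])
  moreover have "\<phi> ((f ^^ n) x) = (g ^^ k) (\<phi> x)"
    using funpow_semiconj_on[OF assms(1,2,4)] \<open>(f ^^ k) x = (f ^^ n) x\<close> by metis
  ultimately show ?thesis
    by (simp only: funpow_0)
qed

lemma top_transitive_mono_on:
  fixes f :: "'a::{linorder_topology,dense_linorder} \<Rightarrow> 'a"
    and \<phi> :: "'a \<Rightarrow> 'b::{linorder_topology,dense_linorder}"
  assumes "continuous_on X \<phi>" and "top_transitive X f"
    and orbit_less: "\<And>u n. u \<in> X \<Longrightarrow> u < (f ^^ n) u \<Longrightarrow> \<phi> u < \<phi> ((f ^^ n) u)"
    and "x \<in> X" "x' \<in> X" "x < x'"
  shows "\<phi> x \<le> \<phi> x'"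
proof (rule ccontr)
  assume "\<not> \<phi> x \<le> \<phi> x'"
  then have "\<phi> x' < \<phi> x"
    by (simp only: not_le)
  then obtain c where c: "\<phi> x' < c" "c < \<phi> x"
    using dense by blast
  obtain m where m: "x < m" "m < x'"
    using dense[OF \<open>x < x'\<close>] by blast
  define U where "U = (X \<inter> \<phi> -` {c<..}) \<inter> {..<m}"
  define V where "V = (X \<inter> \<phi> -` {..<c}) \<inter> {m<..}"
  have "openin (top_of_set X) U" "openin (top_of_set X) V"
    unfolding U_def V_def
    by (simp_all add: openin_Int_open continuous_openin_preimage_gen assms(1))
  moreover have "U \<noteq> {}" "V \<noteq> {}"
    using assms(4,5) c m unfolding U_def V_def by blast+
  ultimately obtain n where "(f ^^ n) ` U \<inter> V \<noteq> {}"
    using assms(2) unfolding top_transitive_def by blast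
  then obtain u where "u \<in> U" "(f ^^ n) u \<in> V"
    by blast
  then have "u \<in> X" "u < (f ^^ n) u" "\<phi> ((f ^^ n) u) < \<phi> u"
    unfolding U_def V_def by auto
  with orbit_less show False
    by (meson less_asym)
qed

theorem proposition2:
  fixes X1 X2 :: "real set"
    and M1 M2 :: "real measure"
    and f1 f2 \<phi> :: "real \<Rightarrow> real"
  assumes "space M1 = X1" and "sets M1 = sets (restrict_space borel X1)"
    and "space M2 = X2" and "sets M2 = sets (restrict_space borel X2)"
    and "mpds M1 f1" and "mpds M2 f2"
    and "mpds_isomorphism M1 f1 M2 f2 \<phi>"
    and "continuous_on X1 \<phi>"
    and "top_transitive X1 f1"
    and "\<forall>x\<in>X1. same_order_patterns f1 x f2 (\<phi> x)"
  shows "\<forall>x\<in>X1. \<forall>x'\<in>X1. x < x' \<longrightarrow> \<phi> x < \<phi> x'"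
proof (intro ballI impI)
  fix x x' assume "x \<in> X1" "x' \<in> X1" "x < x'"
  have invariant: "\<forall>x\<in>X1. f1 x \<in> X1"
    using assms(1,5) unfolding mpds_def by (metis measurable_space)
  have semiconj: "\<forall>x\<in>X1. \<phi> (f1 x) = f2 (\<phi> x)" and "inj_on \<phi> X1"
    using assms(1,7) unfolding mpds_isomorphism_def bij_betw_def by auto
  have "\<phi> x \<le> \<phi> x'"
    using assms(8,9) semiconj_on_orbit_less[OF invariant semiconj assms(10)]
      \<open>x \<in> X1\<close> \<open>x' \<in> X1\<close> \<open>x < x'\<close>
    by (rule top_transitive_mono_on)
  moreover have "\<phi> x \<noteq> \<phi> x'"
    using \<open>inj_on \<phi> X1\<close> \<open>x \<in> X1\<close> \<open>x' \<in> X1\<close> \<open>x < x'\<close> by (auto dest: inj_onD)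
  ultimately show "\<phi> x < \<phi> x'"
    by simp
qed

end
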